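(* Modularity is not monotonic: there exist a graph $G=(V,E)$, a clustering $C$ of $G$, and a $C$-consistent improvement $G'=(V,E')$ of $G$ (with both modularities defined) such that $Q_{\mathrm{mod}}(G',C)<Q_{\mathrm{mod}}(G,C)$.
   Context: A (symmetric weighted) graph is a pair $G=(V,E)$ of a finite set $V$ and $E:V\times V\to\mathbb{R}_{\ge 0}$ symmetric; self loops allowed. A clustering is a partition of $V$ into nonempty disjoint clusters; write $i\sim_C j$ if $i,j$ lie in the same cluster of $C$. For $c\subseteq V$, $v_c=\sum_{i\in c}\sum_{j\in V}E(i,j)$ and $w_c=\sum_{i,j\in c}E(i,j)$. Modularity: $Q_{\mathrm{mod}}(G,C)=\sum_{c\in C}\left(\frac{w_c}{v_V}-\left(\frac{v_c}{v_V}\right)^2\right)$ (defined when $v_V>0$). A graph $G'=(V,E')$ is a $C$-consistent improvement of $G=(V,E)$ if $E'(i,j)\ge E(i,j)$ whenever $i\sim_C j$ and $E'(i,j)\le E(i,j)$ whenever $i\not\sim_C j$. *)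

theory Defs
  imports Complex_Main "HOL-Library.Disjoint_Sets"
begin

text \<open>A symmetric weighted graph on a finite vertex set V; E is only meaningful on V x V.\<close>
definition is_graph :: "'a set \<Rightarrow> ('a \<Rightarrow> 'a \<Rightarrow> real) \<Rightarrow> bool" where
  "is_graph V E \<longleftrightarrow> finite V \<and> (\<forall>i\<in>V. \<forall>j\<in>V. E i j \<ge> 0 \<and> E i j = E j i)"

definition is_clustering :: "'a set \<Rightarrow> 'a set set \<Rightarrow> bool" where
  "is_clustering V C \<longleftrightarrow> partition_on V C"

definition same_cluster :: "'a set set \<Rightarrow> 'a \<Rightarrow> 'a \<Rightarrow> bool" where
  "same_cluster C i j \<longleftrightarrow> (\<exists>c\<in>C. i \<in> c \<and> j \<in> c)"

definition vol :: "'a set \<Rightarrow> ('a \<Rightarrow> 'a \<Rightarrow> real) \<Rightarrow> 'a set \<Rightarrow> real" where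
  "vol V E c = (\<Sum>i\<in>c. \<Sum>j\<in>V. E i j)"

definition wvol :: "('a \<Rightarrow> 'a \<Rightarrow> real) \<Rightarrow> 'a set \<Rightarrow> real" where
  "wvol E c = (\<Sum>i\<in>c. \<Sum>j\<in>c. E i j)"

definition Qmod :: "'a set \<Rightarrow> ('a \<Rightarrow> 'a \<Rightarrow> real) \<Rightarrow> 'a set set \<Rightarrow> real" where
  "Qmod V E C = (\<Sum>c\<in>C. wvol E c / vol V E V - (vol V E c / vol V E V) ^ 2)"

definition consistent_improvement ::
  "'a set \<Rightarrow> 'a set set \<Rightarrow> ('a \<Rightarrow> 'a \<Rightarrow> real) \<Rightarrow> ('a \<Rightarrow> 'a \<Rightarrow> real) \<Rightarrow> bool" where
  "consistent_improvement V C E E' \<longleftrightarrow>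
     (\<forall>i\<in>V. \<forall>j\<in>V. (same_cluster C i j \<longrightarrow> E' i j \<ge> E i j) \<and>
                    (\<not> same_cluster C i j \<longrightarrow> E' i j \<le> E i j))"

end

theory Submission
  imports Defs
begin

text \<open>Take two vertices, each carrying a self-loop and forming its own cluster, with loop
  weights a and 1. The modularity of this clustering is 2a/(a+1)^2, which decreases for a > 1.
  So raising the loop weight at the first vertex from 1 to 3, a change that only strengthens a
  cluster, lowers the modularity from 1/2 to 3/8: the growth of the total volume outweighs the
  gain in internal weight.\<close>

definition loop_graph :: "real \<Rightarrow> nat \<Rightarrow> nat \<Rightarrow> real" where
  "loop_graph a i j = (if i = j then (if i = 0 then a else 1) else 0)"

abbreviation two_vertices :: "nat set" where
  "two_vertices \<equiv> {0, 1}"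

abbreviation singleton_clusters :: "nat set set" where
  "singleton_clusters \<equiv> {{0}, {1}}"

lemma is_graph_loop_graph: "a \<ge> 0 \<Longrightarrow> is_graph two_vertices (loop_graph a)"
  by (auto simp: is_graph_def loop_graph_def)

lemma is_clustering_singleton_clusters: "is_clustering two_vertices singleton_clusters"
  by (auto simp: is_clustering_def partition_on_def disjoint_def)

lemma consistent_improvement_loop_graph:
  "a \<le> b \<Longrightarrow>
    consistent_improvement two_vertices singleton_clusters (loop_graph a) (loop_graph b)"
  by (auto simp: consistent_improvement_def same_cluster_def loop_graph_def)

lemma vol_loop_graph: "vol two_vertices (loop_graph a) two_vertices = a + 1"
  by (simp add: vol_def loop_graph_def)

lemma Qmod_loop_graph:
  assumes "a \<ge> 0"
  shows "Qmod two_vertices (loop_graph a) singleton_clusters = 2 * a / (a + 1)\<^sup>2"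
proof -
  have "Qmod two_vertices (loop_graph a) singleton_clusters
      = a / (a + 1) - (a / (a + 1))\<^sup>2 + (1 / (a + 1) - (1 / (a + 1))\<^sup>2)"
    by (simp add: Qmod_def vol_def wvol_def loop_graph_def)
  also have "\<dots> = 2 * a / (a + 1)\<^sup>2"
    using assms by (simp add: field_simps power2_eq_square)
  finally show ?thesis .
qed

theorem theorem3:
  shows "\<exists>(V :: nat set) (E :: nat \<Rightarrow> nat \<Rightarrow> real) (E' :: nat \<Rightarrow> nat \<Rightarrow> real) (C :: nat set set).
           is_graph V E \<and> is_graph V E' \<and> is_clustering V C \<and>
           consistent_improvement V C E E' \<and>
           vol V E V > 0 \<and> vol V E' V > 0 \<and>
           Qmod V E' C < Qmod V E C"
proof (intro exI conjI)
  show "is_graph two_vertices (loop_graph 1)" "is_graph two_vertices (loop_graph 3)"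
    by (rule is_graph_loop_graph, simp)+
  show "is_clustering two_vertices singleton_clusters"
    by (fact is_clustering_singleton_clusters)
  show "consistent_improvement two_vertices singleton_clusters (loop_graph 1) (loop_graph 3)"
    by (rule consistent_improvement_loop_graph) simp
  show "vol two_vertices (loop_graph 1) two_vertices > 0"
    "vol two_vertices (loop_graph 3) two_vertices > 0"
    unfolding vol_loop_graph by simp_all
  show "Qmod two_vertices (loop_graph 3) singleton_clusters
      < Qmod two_vertices (loop_graph 1) singleton_clusters"
    using Qmod_loop_graph[of 1] Qmod_loop_graph[of 3] by simp
qed

end
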